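(* Let $1\leqslant p<\infty$, $A\in U^p(\mathbb{R},\mathcal{L}(L^2))$ and $B\in V^p(\mathbb{R},\mathcal{L}(L^2))$. Then for all $u\in U^p(\mathbb{R},L^2)$ and $v\in V^p(\mathbb{R},L^2)$ we have $Au\in U^p(\mathbb{R},L^2)$, $Bv\in V^p(\mathbb{R},L^2)$ and $$\|Au\|_{U^p(\mathbb{R},L^2)}\leqslant\|A\|_{U^p(\mathbb{R},\mathcal{L}(L^2))}\|u\|_{U^p(\mathbb{R},L^2)},\qquad\|Bv\|_{V^p(\mathbb{R},L^2)}\leqslant\|B\|_{V^p(\mathbb{R},\mathcal{L}(L^2))}\|v\|_{V^p(\mathbb{R},L^2)}.$$ If in addition $A$, respectively $B$, commutes with the Fourier multipliers $P_\lambda$ for all $\lambda\in2^{\mathbb{Z}}$, then $$\|Au\|_{\ell^2U^p(\mathbb{R},L^2)}\leqslant\|A\|_{U^p(\mathbb{R},\mathcal{L}(L^2))}\|u\|_{\ell^2U^p(\mathbb{R},L^2)},\qquad\|Bv\|_{\ell^2V^p(\mathbb{R},L^2)}\leqslant\|B\|_{V^p(\mathbb{R},\mathcal{L}(L^2))}\|v\|_{\ell^2V^p(\mathbb{R},L^2)}.$$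
   Context: $L^2=L^2(\mathbb{R}^d;\mathbb{C}^N)$, $\mathcal{L}(L^2)$ the bounded operators with operator norm. For a Banach space $E$ ($E=L^2$ or $\mathcal{L}(L^2)$) and $1\leqslant p<\infty$: step functions are $u(t)=\sum_{j=1}^N\mathbb{1}_{[t_j,t_{j+1})}(t)f_j$ with $t_1<\dots<t_N$, $t_{N+1}=\infty$, $f_j\in E$; a $U^p$-atom is a step function with $\sum_j\|f_j\|_E^p=1$; $U^p(\mathbb{R},E)$ consists of $\sum c_ju_j$, $(c_j)\in\ell^1$, $u_j$ atoms, normed by $\inf\sum|c_j|$. $V^p(\mathbb{R},E)$ consists of right-continuous $v:\mathbb{R}\to E$ with $v(t)\to0$ as $t\to-\infty$ and $\|v\|_{V^p}=\sup_t\|v(t)\|_E+\sup_{t_1<\dots<t_N}(\sum_{j=1}^{N-1}\|v(t_{j+1})-v(t_j)\|_E^p)^{1/p}<\infty$. $(Au)(t)=A(t)u(t)$. $P_\lambda$ ($\lambda\in2^\mathbb{Z}$): smooth Littlewood–Paley projections to $|\xi|\approx\lambda$ summing to $I$; $\|u\|_{\ell^2U^p}=(\sum_\lambda\|P_\lambda u\|^2_{U^p})^{1/2}$, $\|v\|_{\ell^2V^p}=(\sum_\lambda\|P_\lambda v\|^2_{V^p})^{1/2}$. *)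

theory Defs
  imports "HOL-Analysis.Analysis"
begin

text \<open>Step function  sum_j 1_[t_j,t_{j+1})(t) f_j  with t_{N+1} = infinity.\<close>
definition step_fun :: "real list \<Rightarrow> 'a::real_normed_vector list \<Rightarrow> real \<Rightarrow> 'a" where
  "step_fun ts fs t =
     (\<Sum>j<length ts. if ts!j \<le> t \<and> (Suc j < length ts \<longrightarrow> t < ts!Suc j) then fs!j else 0)"

definition Up_atom :: "real \<Rightarrow> (real \<Rightarrow> 'a::real_normed_vector) \<Rightarrow> bool" where
  "Up_atom p a \<longleftrightarrow> (\<exists>ts fs. length fs = length ts \<and> ts \<noteq> [] \<and> sorted_wrt (<) ts \<and>
      a = step_fun ts fs \<and> (\<Sum>j<length fs. norm (fs!j) powr p) = 1)"

definition Up_repr :: "real \<Rightarrow> (real \<Rightarrow> 'a::real_normed_vector) \<Rightarrow> (nat \<Rightarrow> real) \<Rightarrow> (nat \<Rightarrow> real \<Rightarrow> 'a) \<Rightarrow> bool" where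
  "Up_repr p u c a \<longleftrightarrow> summable (\<lambda>j. \<bar>c j\<bar>) \<and> (\<forall>j. c j \<noteq> 0 \<longrightarrow> Up_atom p (a j)) \<and>
      (\<forall>t. (\<lambda>j. c j *\<^sub>R a j t) sums u t)"

definition in_Up :: "real \<Rightarrow> (real \<Rightarrow> 'a::real_normed_vector) \<Rightarrow> bool" where
  "in_Up p u \<longleftrightarrow> (\<exists>c a. Up_repr p u c a)"

definition Up_norm :: "real \<Rightarrow> (real \<Rightarrow> 'a::real_normed_vector) \<Rightarrow> real" where
  "Up_norm p u = Inf {s. \<exists>c a. Up_repr p u c a \<and> s = (\<Sum>j. \<bar>c j\<bar>)}"

definition pvar_sum :: "real \<Rightarrow> (real \<Rightarrow> 'a::real_normed_vector) \<Rightarrow> real list \<Rightarrow> real" where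
  "pvar_sum p v ts = (\<Sum>j<length ts - 1. norm (v (ts!Suc j) - v (ts!j)) powr p) powr (1/p)"

definition in_Vp :: "real \<Rightarrow> (real \<Rightarrow> 'a::real_normed_vector) \<Rightarrow> bool" where
  "in_Vp p v \<longleftrightarrow> (\<forall>t. continuous (at_right t) v) \<and> (v \<longlongrightarrow> 0) at_bot \<and>
      bdd_above (range (\<lambda>t. norm (v t))) \<and>
      bdd_above (pvar_sum p v ` {ts. sorted_wrt (<) ts})"

definition Vp_norm :: "real \<Rightarrow> (real \<Rightarrow> 'a::real_normed_vector) \<Rightarrow> real" where
  "Vp_norm p v = (SUP t. norm (v t)) + (SUP ts\<in>{ts. sorted_wrt (<) ts}. pvar_sum p v ts)"

text \<open>Littlewood--Paley square-sum norms; P k stands for P_{2^k}, applied pointwise in time.\<close>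
definition l2Up_sq :: "real \<Rightarrow> (int \<Rightarrow> ('a::real_normed_vector \<Rightarrow>\<^sub>L 'a)) \<Rightarrow> (real \<Rightarrow> 'a) \<Rightarrow> int \<Rightarrow> real" where
  "l2Up_sq p P u k = (Up_norm p (\<lambda>t. blinfun_apply (P k) (u t)))\<^sup>2"

definition l2Vp_sq :: "real \<Rightarrow> (int \<Rightarrow> ('a::real_normed_vector \<Rightarrow>\<^sub>L 'a)) \<Rightarrow> (real \<Rightarrow> 'a) \<Rightarrow> int \<Rightarrow> real" where
  "l2Vp_sq p P v k = (Vp_norm p (\<lambda>t. blinfun_apply (P k) (v t)))\<^sup>2"

definition l2Up_norm :: "real \<Rightarrow> (int \<Rightarrow> ('a::real_normed_vector \<Rightarrow>\<^sub>L 'a)) \<Rightarrow> (real \<Rightarrow> 'a) \<Rightarrow> real" where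
  "l2Up_norm p P u = sqrt (infsum (l2Up_sq p P u) UNIV)"

definition l2Vp_norm :: "real \<Rightarrow> (int \<Rightarrow> ('a::real_normed_vector \<Rightarrow>\<^sub>L 'a)) \<Rightarrow> (real \<Rightarrow> 'a) \<Rightarrow> real" where
  "l2Vp_norm p P v = sqrt (infsum (l2Vp_sq p P v) UNIV)"

end

theory Submission
  imports Defs
begin

(* A product of two U^p atoms is a step function on the merged partition. Distinct intervals of
   the merged partition lie in distinct pairs of intervals of the two partitions, so its p-sum of
   values is at most the product of the two p-sums: the product is a multiple of an atom with
   factor at most 1. Multiplying atomic decompositions of A and u term by term and enumerating the
   index pairs by the Cantor pairing gives a decomposition of Au whose l1-norm of coefficients is at
   most the product of the two l1-norms; the double series converges to Au pointwise by a Cauchy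
   product argument for bounded bilinear maps.

   For V^p, the increment of Bv splits as (Delta B) v + B (Delta v), so Minkowski's inequality in
   l^p bounds the p-variation of Bv by sup|v| var_p(B) + sup|B| var_p(v); together with
   sup|Bv| <= sup|B| sup|v| this is at most the product of the two V^p norms.

   The square-sum estimates follow frequency by frequency, since P_k (A u) = A (P_k u) and P_k u
   again lies in U^p (resp. V^p). *)

section \<open>Series and elementary inequalities\<close>

lemma has_sum_finite_approx:
  assumes "\<And>M. finite (F M)" "e \<longlonglongrightarrow> 0"
    and "\<And>M Z. finite Z \<Longrightarrow> F M \<subseteq> Z \<Longrightarrow> dist (sum f Z) S \<le> e M"
  shows "(f has_sum S) UNIV"
  unfolding has_sum_def tendsto_iff eventually_finite_subsets_at_top
proof (intro allI impI)
  fix \<epsilon> :: real assume "0 < \<epsilon>"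
  then obtain M where "e M < \<epsilon>"
    using order_tendstoD(2)[OF assms(2)] by (metis eventually_sequentially order_refl)
  then show "\<exists>X. finite X \<and> X \<subseteq> UNIV \<and>
      (\<forall>Y. finite Y \<and> X \<subseteq> Y \<and> Y \<subseteq> UNIV \<longrightarrow> dist (sum f Y) S < \<epsilon>)"
    using assms(1,3) by (intro exI[of _ "F M"]) force
qed

lemma sum_mult_le_suminf_mult:
  fixes x y :: "nat \<Rightarrow> real"
  assumes "summable x" "summable y" "\<And>i. 0 \<le> x i" "\<And>j. 0 \<le> y j" "finite Z"
  shows "(\<Sum>(i, j)\<in>Z. x i * y j) \<le> suminf x * suminf y"
proof -
  have "(\<Sum>(i, j)\<in>Z. x i * y j) \<le> (\<Sum>(i, j)\<in>fst ` Z \<times> snd ` Z. x i * y j)"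
    using assms by (intro sum_mono2) (auto simp: rev_image_eqI)
  also have "\<dots> = sum x (fst ` Z) * sum y (snd ` Z)"
    by (simp add: sum_product sum.cartesian_product)
  also have "\<dots> \<le> suminf x * suminf y"
    using assms by (intro mult_mono sum_le_suminf suminf_nonneg sum_nonneg) auto
  finally show ?thesis .
qed

(* Unlike the Cauchy product theorems of the library this needs no completeness: the limits X and Y
   are given, and the partial sums over growing squares converge to prod X Y. *)
lemma (in bounded_bilinear) has_sum_prod:
  assumes x: "summable (\<lambda>i. norm (x i))" "x sums X"
    and y: "summable (\<lambda>j. norm (y j))" "y sums Y"
  shows "((\<lambda>(i, j). prod (x i) (y j)) has_sum prod X Y) UNIV"
proof -
  obtain K where K: "0 < K" "\<And>a b. norm (prod a b) \<le> norm a * norm b * K"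
    using pos_bounded by blast
  define Nx Ny where "Nx = (\<Sum>i. norm (x i))" and "Ny = (\<Sum>j. norm (y j))"
  define err where "err M = K * (Nx * Ny - (\<Sum>i<M. norm (x i)) * (\<Sum>j<M. norm (y j)))
      + norm (prod (\<Sum>i<M. x i) (\<Sum>j<M. y j) - prod X Y)" for M
  have "err \<longlonglongrightarrow> K * (Nx * Ny - Nx * Ny) + norm (prod X Y - prod X Y)"
    unfolding err_def Nx_def Ny_def using x y
    by (intro tendsto_intros tendsto summable_LIMSEQ) (auto simp: sums_def)
  then have err: "err \<longlonglongrightarrow> 0" by simp
  show ?thesis
  proof (rule has_sum_finite_approx[OF _ err])
    fix M and Z :: "(nat \<times> nat) set"
    assume Z: "finite Z" "{..<M} \<times> {..<M} \<subseteq> Z"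
    define Q where "Q = {..<M} \<times> {..<M}"
    have sum_Q: "(\<Sum>(i, j)\<in>Q. prod (x i) (y j)) = prod (\<Sum>i<M. x i) (\<Sum>j<M. y j)"
      unfolding Q_def by (simp only: sum_left) (simp add: sum_right sum.cartesian_product)
    have "norm (\<Sum>(i, j)\<in>Z - Q. prod (x i) (y j)) \<le> (\<Sum>(i, j)\<in>Z - Q. norm (x i) * norm (y j) * K)"
      by (rule order_trans[OF norm_sum sum_mono]) (auto simp: K(2))
    also have "\<dots> = K * ((\<Sum>(i, j)\<in>Z. norm (x i) * norm (y j))
        - (\<Sum>(i, j)\<in>Q. norm (x i) * norm (y j)))"
      using Z
      by (simp add: sum_diff Q_def right_diff_distrib sum_distrib_left mult.commute case_prod_unfold)
    also have "\<dots> \<le> K * (Nx * Ny - (\<Sum>i<M. norm (x i)) * (\<Sum>j<M. norm (y j)))"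
      using K(1) Z x(1) y(1) unfolding Nx_def Ny_def Q_def
      by (auto intro!: mult_left_mono sum_mult_le_suminf_mult
               simp: sum_product sum.cartesian_product)
    finally have tail: "norm (\<Sum>(i, j)\<in>Z - Q. prod (x i) (y j)) \<le> \<dots>" .
    have "sum (\<lambda>(i, j). prod (x i) (y j)) Z
        = (\<Sum>(i, j)\<in>Q. prod (x i) (y j)) + (\<Sum>(i, j)\<in>Z - Q. prod (x i) (y j))"
      using sum.subset_diff[of Q Z] Z unfolding Q_def by (metis add.commute)
    then show "dist (sum (\<lambda>(i, j). prod (x i) (y j)) Z) (prod X Y) \<le> err M"
      using tail norm_triangle_ineq[of "(\<Sum>(i, j)\<in>Z - Q. prod (x i) (y j))"
          "prod (\<Sum>i<M. x i) (\<Sum>j<M. y j) - prod X Y"]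
      unfolding err_def dist_norm sum_Q by (simp add: algebra_simps)
  qed simp
qed

lemma has_sum_imp_sums_prod_decode:
  "(f has_sum S) UNIV \<Longrightarrow> (\<lambda>n. f (prod_decode n)) sums S"
  using has_sum_reindex_bij_betw[OF bij_prod_decode, of f S] by (simp add: has_sum_imp_sums)

lemma le_cInf_mult:
  fixes S T :: "real set"
  assumes S: "S \<noteq> {}" "\<And>s. s \<in> S \<Longrightarrow> 0 \<le> s" and T: "T \<noteq> {}" "\<And>t. t \<in> T \<Longrightarrow> 0 \<le> t"
    and le: "\<And>s t. s \<in> S \<Longrightarrow> t \<in> T \<Longrightarrow> x \<le> s * t"
  shows "x \<le> Inf S * Inf T"
proof (cases "x \<le> 0")
  case True
  moreover have "0 \<le> Inf S" "0 \<le> Inf T"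
    using S T by (auto intro: cInf_greatest)
  ultimately show ?thesis by (meson mult_nonneg_nonneg order_trans)
next
  case False
  obtain s0 where s0: "s0 \<in> S" using S(1) by blast
  have t_pos: "0 < t" if "t \<in> T" for t
    using le[OF s0 that] T(2)[OF that] False by (cases "t = 0") auto
  have quot_le: "x / t \<le> Inf S" if "t \<in> T" for t
    using S le[OF _ that] t_pos[OF that] by (intro cInf_greatest) (auto simp: pos_divide_le_eq)
  obtain t0 where t0: "t0 \<in> T" using T(1) by blast
  have "0 < Inf S"
    using quot_le[OF t0] t_pos[OF t0] False by (meson divide_pos_pos not_le order_less_le_trans)
  have "x / Inf S \<le> t" if "t \<in> T" for t
    using quot_le[OF that] \<open>0 < Inf S\<close> t_pos[OF that]
    by (simp add: pos_divide_le_eq mult.commute)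
  then have "x / Inf S \<le> Inf T" using T(1) by (intro cInf_greatest)
  then show ?thesis using \<open>0 < Inf S\<close> by (simp add: pos_divide_le_eq mult.commute)
qed

lemma powr_convex_nonneg:
  fixes x y l p :: real
  assumes p: "1 \<le> p" and xy: "0 \<le> x" "0 \<le> y" and l: "0 \<le> l" "l \<le> 1"
  shows "(l * x + (1 - l) * y) powr p \<le> l * x powr p + (1 - l) * y powr p"
proof -
  have le_self: "c powr p \<le> c" if "0 \<le> c" "c \<le> 1" for c :: real
    using powr_mono'[OF p that] that by simp
  consider "x = 0" | "y = 0" | "0 < x" "0 < y" using xy by fastforce
  then show ?thesis
  proof cases
    case 1
    then show ?thesis
      using le_self[of "1 - l"] l xy by (simp add: powr_mult mult_right_mono)
  next
    case 2
    then show ?thesis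
      using le_self[of l] l xy by (simp add: powr_mult mult_right_mono)
  next
    case 3
    then show ?thesis
      using convex_onD[OF powr_convex[OF p], of l y x] l by (simp add: algebra_simps)
  qed
qed

lemma Minkowski_sum_powr:
  fixes a b :: "'i \<Rightarrow> real"
  assumes I: "finite I" and p: "1 \<le> p" and a: "\<And>i. 0 \<le> a i" and b: "\<And>i. 0 \<le> b i"
  shows "(\<Sum>i\<in>I. (a i + b i) powr p) powr (1 / p)
    \<le> (\<Sum>i\<in>I. a i powr p) powr (1 / p) + (\<Sum>i\<in>I. b i powr p) powr (1 / p)"
proof -
  define A B where "A = (\<Sum>i\<in>I. a i powr p) powr (1 / p)" and "B = (\<Sum>i\<in>I. b i powr p) powr (1 / p)"
  have A_powr: "A powr p = (\<Sum>i\<in>I. a i powr p)" and B_powr: "B powr p = (\<Sum>i\<in>I. b i powr p)"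
    using p by (simp_all add: A_def B_def powr_powr sum_nonneg)
  have zero: "\<forall>i\<in>I. f i = 0" if "(\<Sum>i\<in>I. f i powr p) powr (1 / p) = 0" "\<And>i. 0 \<le> f i"
    for f :: "'i \<Rightarrow> real"
    using that I by (simp add: sum_nonneg_eq_0_iff)
  consider "A = 0" | "B = 0" | "0 < A" "0 < B" unfolding A_def B_def by fastforce
  then show ?thesis
  proof cases
    case 1
    then show ?thesis using zero[of a] a unfolding A_def B_def by simp
  next
    case 2
    then show ?thesis using zero[of b] b unfolding A_def B_def by simp
  next
    case 3
    define l where "l = A / (A + B)"
    have l: "0 \<le> l" "l \<le> 1" "(A + B) * l = A" "(A + B) * (1 - l) = B"
      using 3 by (auto simp: l_def field_simps)
    have "(a i + b i) powr p
        \<le> (A + B) powr p * (l * (a i powr p / A powr p) + (1 - l) * (b i powr p / B powr p))"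
      for i
    proof -
      have "a i + b i = (A + B) * (l * (a i / A) + (1 - l) * (b i / B))"
        using 3 l(3,4) by (simp add: distrib_left flip: mult.assoc)
      then have "(a i + b i) powr p = (A + B) powr p * (l * (a i / A) + (1 - l) * (b i / B)) powr p"
        using 3 l(1,2) a[of i] b[of i] by (simp add: powr_mult)
      also have "\<dots> \<le> (A + B) powr p * (l * (a i / A) powr p + (1 - l) * (b i / B) powr p)"
        using 3 l a[of i] b[of i] by (intro mult_left_mono powr_convex_nonneg p) auto
      finally show ?thesis using 3 a[of i] b[of i] by (simp add: powr_divide)
    qed
    then have "(\<Sum>i\<in>I. (a i + b i) powr p)
        \<le> (\<Sum>i\<in>I. (A + B) powr p
              * (l * (a i powr p / A powr p) + (1 - l) * (b i powr p / B powr p)))"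
      by (rule sum_mono)
    also have "\<dots> = (A + B) powr p * (l * (A powr p / A powr p) + (1 - l) * (B powr p / B powr p))"
      unfolding A_powr B_powr
      by (simp only: sum_distrib_left[symmetric] sum.distrib sum_divide_distrib[symmetric])
    also have "\<dots> = (A + B) powr p" using 3 by simp
    finally have "(\<Sum>i\<in>I. (a i + b i) powr p) powr (1 / p) \<le> ((A + B) powr p) powr (1 / p)"
      using p by (intro powr_mono2) (auto intro: sum_nonneg)
    then show ?thesis using 3 p by (simp add: A_def B_def powr_powr)
  qed
qed

lemma sum_powr_scale:
  fixes x :: "'i \<Rightarrow> real"
  assumes "0 \<le> c" "0 < p" "\<And>i. 0 \<le> x i"
  shows "(\<Sum>i\<in>I. (c * x i) powr p) powr (1 / p) = c * (\<Sum>i\<in>I. x i powr p) powr (1 / p)"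
proof -
  have "(\<Sum>i\<in>I. (c * x i) powr p) = c powr p * (\<Sum>i\<in>I. x i powr p)"
    using assms by (simp add: powr_mult sum_distrib_left)
  then show ?thesis
    using assms by (simp add: powr_mult sum_nonneg powr_powr)
qed

lemma sqrt_infsum_le:
  fixes f g :: "'i \<Rightarrow> real"
  assumes g: "g summable_on UNIV" and f: "\<And>k. 0 \<le> f k" "\<And>k. f k \<le> N\<^sup>2 * g k" and N: "0 \<le> N"
  shows "f summable_on UNIV \<and> sqrt (infsum f UNIV) \<le> N * sqrt (infsum g UNIV)"
proof
  have Ng: "(\<lambda>k. N\<^sup>2 * g k) summable_on UNIV" by (rule summable_on_cmult_right[OF g])
  show fs: "f summable_on UNIV"
    by (rule summable_on_comparison_test[OF Ng]) (use f in auto)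
  have "infsum f UNIV \<le> N\<^sup>2 * infsum g UNIV"
    using infsum_mono[OF fs Ng f(2)] by (simp add: infsum_cmult_right[OF g])
  then have "sqrt (infsum f UNIV) \<le> sqrt (N\<^sup>2 * infsum g UNIV)" by simp
  also have "\<dots> = N * sqrt (infsum g UNIV)" using N by (simp add: real_sqrt_mult)
  finally show "sqrt (infsum f UNIV) \<le> N * sqrt (infsum g UNIV)" .
qed


section \<open>Step functions\<close>

definition step_count :: "real list \<Rightarrow> real \<Rightarrow> nat" where
  "step_count ts t = length (takeWhile (\<lambda>s. s \<le> t) ts)"

lemma step_count_le_length: "step_count ts t \<le> length ts"
  unfolding step_count_def by (rule length_takeWhile_le)

lemma less_step_count_iff:
  assumes "sorted ts"
  shows "j < step_count ts t \<longleftrightarrow> j < length ts \<and> ts!j \<le> t"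
proof
  assume "j < step_count ts t"
  then show "j < length ts \<and> ts!j \<le> t"
    unfolding step_count_def
    by (metis length_takeWhile_le nth_mem order_less_le_trans set_takeWhileD takeWhile_nth)
next
  assume j: "j < length ts \<and> ts!j \<le> t"
  show "j < step_count ts t"
  proof (rule ccontr)
    assume "\<not> j < step_count ts t"
    then have "step_count ts t < length ts" "ts ! step_count ts t \<le> ts!j"
      using j assms by (auto simp: sorted_iff_nth_mono)
    with j nth_length_takeWhile show False unfolding step_count_def by fastforce
  qed
qed

lemma step_count_less:
  assumes "sorted ts" "s < t" "t \<in> set ts"
  shows "step_count ts s < step_count ts t"
proof -
  obtain m where m: "m < length ts" "ts!m = t" using assms(3) by (auto simp: in_set_conv_nth)
  then have "m < step_count ts t" "\<not> m < step_count ts s"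
    using assms(1,2) by (auto simp: less_step_count_iff)
  then show ?thesis by linarith
qed

lemma step_fun_eq_nth:
  assumes "sorted ts"
  shows "step_fun ts fs t = (0 # fs) ! step_count ts t"
proof -
  define n where "n = step_count ts t"
  have n: "n \<le> length ts" unfolding n_def by (rule step_count_le_length)
  have "(ts!j \<le> t \<and> (Suc j < length ts \<longrightarrow> t < ts!Suc j)) \<longleftrightarrow> Suc j = n"
    if "j < length ts" for j
    using that n less_step_count_iff[OF assms, of _ t] unfolding n_def[symmetric]
    by (metis Suc_leI linorder_not_le not_less_eq order_less_le)
  then have "step_fun ts fs t = (\<Sum>j<length ts. if j = n - 1 \<and> 0 < n then fs!j else 0)"
    unfolding step_fun_def by (intro sum.cong) auto
  also have "\<dots> = (0 # fs) ! n"
    using n by (cases n) auto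
  finally show ?thesis unfolding n_def .
qed

lemma step_fun_map:
  assumes "sorted ts" "length fs = length ts" "g 0 = 0"
  shows "g (step_fun ts fs t) = step_fun ts (map g fs) t"
  using assms step_count_le_length[of ts t]
  by (cases "step_count ts t") (auto simp: step_fun_eq_nth)

lemma step_fun_map2:
  assumes "sorted ts" "length fs = length ts" "length gs = length ts" "h 0 0 = 0"
  shows "h (step_fun ts fs t) (step_fun ts gs t) = step_fun ts (map2 h fs gs) t"
  using assms step_count_le_length[of ts t]
  by (cases "step_count ts t") (auto simp: step_fun_eq_nth)

lemma step_fun_refine:
  assumes ts: "sorted ts" and rs: "sorted rs" and sub: "set ts \<subseteq> set rs"
  shows "step_fun ts fs t = step_fun rs (map (step_fun ts fs) rs) t"
proof (cases "step_count rs t")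
  case 0
  have "step_count ts t = 0"
  proof (rule ccontr)
    assume "step_count ts t \<noteq> 0"
    then have "ts!0 \<in> set rs" "ts!0 \<le> t"
      using sub less_step_count_iff[OF ts, of 0 t] by auto
    then obtain k where "k < length rs" "rs!k \<le> t" by (metis in_set_conv_nth)
    with 0 show False using less_step_count_iff[OF rs, of k t] by simp
  qed
  with 0 show ?thesis using ts rs by (simp add: step_fun_eq_nth)
next
  case (Suc m)
  have m: "m < length rs" "rs!m \<le> t"
    using Suc less_step_count_iff[OF rs, of m t] by auto
  have "x \<le> rs!m \<longleftrightarrow> x \<le> t" if x: "x \<in> set ts" for x
  proof
    assume "x \<le> t"
    obtain k where k: "k < length rs" "rs!k = x"
      using x sub by (metis in_set_conv_nth subsetD)
    then have "k \<le> m"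
      using \<open>x \<le> t\<close> Suc less_step_count_iff[OF rs, of k t] by simp
    then show "x \<le> rs!m"
      using k m rs by (auto intro: sorted_nth_mono)
  qed (use m in simp)
  then have "step_count ts (rs!m) = step_count ts t"
    unfolding step_count_def by (intro takeWhile_cong[THEN arg_cong]) auto
  then show ?thesis using Suc m ts rs by (simp add: step_fun_eq_nth)
qed

definition norm_powr_sum :: "real \<Rightarrow> 'a::real_normed_vector list \<Rightarrow> real" where
  "norm_powr_sum p fs = (\<Sum>j<length fs. norm (fs!j) powr p)"

lemma norm_powr_sum_nonneg: "0 \<le> norm_powr_sum p fs"
  unfolding norm_powr_sum_def by (simp add: sum_nonneg)

lemma norm_powr_sum_Cons_0 [simp]: "norm_powr_sum p (0 # fs) = norm_powr_sum p fs"
  unfolding norm_powr_sum_def by (simp only: length_Cons sum.lessThan_Suc_shift) simp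

lemma norm_powr_sum_map_le:
  assumes "0 \<le> p" "0 \<le> K" "\<And>x. norm (g x) \<le> K * norm x"
  shows "norm_powr_sum p (map g fs) \<le> K powr p * norm_powr_sum p fs"
proof -
  have "norm (g x) powr p \<le> K powr p * norm x powr p" for x
    using powr_mono2[OF assms(1) norm_ge_zero assms(3)] assms(2) by (simp add: powr_mult)
  then show ?thesis
    unfolding norm_powr_sum_def by (simp add: sum_distrib_left sum_mono)
qed

lemma norm_powr_sum_refined_apply_le:
  fixes Fs :: "('a::real_normed_vector \<Rightarrow>\<^sub>L 'b::real_normed_vector) list" and gs :: "'a list"
  assumes ts: "sorted ts" and ss: "sorted ss" and rs: "sorted_wrt (<) rs"
    and sub: "set rs \<subseteq> set ts \<union> set ss"
    and len: "length Fs = length ts" "length gs = length ss" and p: "0 \<le> p"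
  shows "norm_powr_sum p (map (\<lambda>r. step_fun ts Fs r (step_fun ss gs r)) rs)
    \<le> norm_powr_sum p Fs * norm_powr_sum p gs"
proof -
  define \<kappa> where "\<kappa> k = (step_count ts (rs!k), step_count ss (rs!k))" for k
  define \<phi> where "\<phi> n = norm ((0 # Fs) ! n) powr p" for n
  define \<psi> where "\<psi> n = norm ((0 # gs) ! n) powr p" for n
  have inj: "inj_on \<kappa> {..<length rs}"
  proof (rule linorder_inj_onI')
    fix k k' assume "k \<in> {..<length rs}" "k' \<in> {..<length rs}" "k < k'"
    then have "rs!k < rs!k'" "rs!k' \<in> set ts \<union> set ss"
      using rs sub nth_mem[of k' rs] by (auto simp: sorted_wrt_iff_nth_less subset_iff)
    then show "\<kappa> k \<noteq> \<kappa> k'"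
      unfolding \<kappa>_def using step_count_less[OF ts] step_count_less[OF ss] by fastforce
  qed
  have "norm (step_fun ts Fs r (step_fun ss gs r)) powr p
      \<le> (norm (step_fun ts Fs r) * norm (step_fun ss gs r)) powr p" for r
    using p by (intro powr_mono2 norm_blinfun) auto
  then have value_bound: "norm (step_fun ts Fs (rs!k) (step_fun ss gs (rs!k))) powr p
      \<le> \<phi> (fst (\<kappa> k)) * \<psi> (snd (\<kappa> k))" for k
    unfolding \<phi>_def \<psi>_def \<kappa>_def by (simp add: step_fun_eq_nth ts ss powr_mult)
  have "norm_powr_sum p (map (\<lambda>r. step_fun ts Fs r (step_fun ss gs r)) rs)
      \<le> (\<Sum>k<length rs. \<phi> (fst (\<kappa> k)) * \<psi> (snd (\<kappa> k)))"
    unfolding norm_powr_sum_def by (auto intro: sum_mono value_bound)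
  also have "\<dots> = (\<Sum>x\<in>\<kappa> ` {..<length rs}. \<phi> (fst x) * \<psi> (snd x))"
    by (simp add: sum.reindex[OF inj])
  also have "\<dots> \<le> (\<Sum>x\<in>{..<length (0 # Fs)} \<times> {..<length (0 # gs)}. \<phi> (fst x) * \<psi> (snd x))"
    using len step_count_le_length[of ts] step_count_le_length[of ss]
    by (intro sum_mono2) (auto simp: \<kappa>_def \<phi>_def \<psi>_def less_Suc_eq_le)
  also have "\<dots> = norm_powr_sum p (0 # Fs) * norm_powr_sum p (0 # gs)"
    unfolding norm_powr_sum_def \<phi>_def \<psi>_def
    by (simp only: sum_product sum.cartesian_product case_prod_unfold)
  finally show ?thesis by simp
qed


section \<open>Products in U^p\<close>

definition atom_multiple :: "real \<Rightarrow> real \<Rightarrow> (real \<Rightarrow> 'a::real_normed_vector) \<Rightarrow> bool" where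
  "atom_multiple p K f \<longleftrightarrow>
     (\<exists>\<gamma> w. 0 \<le> \<gamma> \<and> \<gamma> \<le> K \<and> (\<gamma> \<noteq> 0 \<longrightarrow> Up_atom p w) \<and> f = (\<lambda>t. \<gamma> *\<^sub>R w t))"

lemma step_fun_atom_multiple:
  assumes ts: "sorted_wrt (<) ts" and len: "length fs = length ts" and p: "0 < p"
    and K: "0 \<le> K" "norm_powr_sum p fs \<le> K powr p"
  shows "atom_multiple p K (step_fun ts fs)"
proof (cases "norm_powr_sum p fs = 0")
  case True
  then have "\<forall>j<length fs. fs!j = 0"
    unfolding norm_powr_sum_def by (simp add: sum_nonneg_eq_0_iff)
  then have fs0: "map (\<lambda>_. 0) fs = fs" by (intro map_idI) (auto simp: in_set_conv_nth)
  have "step_fun ts fs t = 0" for t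
    using step_fun_map[of ts fs "\<lambda>_. 0 :: 'a" t] ts len by (simp add: strict_sorted_imp_sorted fs0)
  then show ?thesis
    unfolding atom_multiple_def using K by (intro exI[of _ 0] exI[of _ "\<lambda>_. 0"]) auto
next
  case False
  define \<sigma> where "\<sigma> = norm_powr_sum p fs"
  have \<sigma>: "0 < \<sigma>" using False norm_powr_sum_nonneg[of p fs] unfolding \<sigma>_def by linarith
  define c where "c = inverse (\<sigma> powr (1 / p))"
  have c: "0 < c" "c powr p * \<sigma> = 1" "\<sigma> powr (1 / p) * c = 1"
    using \<sigma> p by (simp_all add: c_def inverse_powr powr_powr)
  have "norm_powr_sum p (map (\<lambda>x. c *\<^sub>R x) fs) = c powr p * \<sigma>"
    using c(1) unfolding norm_powr_sum_def \<sigma>_def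
    by (simp add: powr_mult sum_distrib_left)
  moreover have "ts \<noteq> []" using False len unfolding norm_powr_sum_def by auto
  ultimately have atom: "Up_atom p (step_fun ts (map (\<lambda>x. c *\<^sub>R x) fs))"
    unfolding Up_atom_def norm_powr_sum_def[symmetric] using ts len c(2)
    by (intro exI[of _ ts] exI[of _ "map (\<lambda>x. c *\<^sub>R x) fs"]) auto
  have "step_fun ts fs t = \<sigma> powr (1 / p) *\<^sub>R step_fun ts (map (\<lambda>x. c *\<^sub>R x) fs) t" for t
    using step_fun_map[of ts fs "\<lambda>x. c *\<^sub>R x" t, symmetric] ts len c(3)
    by (simp add: strict_sorted_imp_sorted)
  moreover have "\<sigma> powr (1 / p) \<le> K"
    using powr_mono2[of "1 / p" \<sigma> "K powr p"] K p \<sigma> unfolding \<sigma>_def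
    by (simp add: powr_powr)
  ultimately show ?thesis
    unfolding atom_multiple_def using atom by (intro exI[of _ "\<sigma> powr (1 / p)"]) auto
qed

lemma atom_multiple_blinfun:
  fixes L :: "'a::real_normed_vector \<Rightarrow>\<^sub>L 'b::real_normed_vector"
  assumes "Up_atom p b" "0 < p"
  shows "atom_multiple p (norm L) (\<lambda>t. L (b t))"
proof -
  obtain ts gs where b: "length gs = length ts" "sorted_wrt (<) ts" "b = step_fun ts gs"
      "norm_powr_sum p gs = 1"
    using assms(1) unfolding Up_atom_def norm_powr_sum_def[symmetric] by blast
  have "(\<lambda>t. L (b t)) = step_fun ts (map L gs)"
    using step_fun_map[of ts gs "blinfun_apply L"] b by (auto simp: strict_sorted_imp_sorted)
  moreover have "norm_powr_sum p (map L gs) \<le> norm L powr p"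
    using norm_powr_sum_map_le[of p "norm L" "blinfun_apply L" gs] assms b
    by (simp add: norm_blinfun)
  ultimately show ?thesis
    using step_fun_atom_multiple[OF b(2), of "map L gs" p "norm L"] b(1) assms(2) by simp
qed

lemma atom_multiple_apply:
  fixes a :: "real \<Rightarrow> ('a::real_normed_vector \<Rightarrow>\<^sub>L 'b::real_normed_vector)"
    and b :: "real \<Rightarrow> 'a"
  assumes "Up_atom p a" "Up_atom p b" "0 < p"
  shows "atom_multiple p 1 (\<lambda>t. a t (b t))"
proof -
  obtain ts Fs where a: "length Fs = length ts" "sorted_wrt (<) ts" "a = step_fun ts Fs"
      "norm_powr_sum p Fs = 1"
    using assms(1) unfolding Up_atom_def norm_powr_sum_def[symmetric] by blast
  obtain ss gs where b: "length gs = length ss" "sorted_wrt (<) ss" "b = step_fun ss gs"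
      "norm_powr_sum p gs = 1"
    using assms(2) unfolding Up_atom_def norm_powr_sum_def[symmetric] by blast
  define rs where "rs = sorted_list_of_set (set ts \<union> set ss)"
  have rs: "sorted_wrt (<) rs" "set rs = set ts \<union> set ss"
    by (simp_all add: rs_def)
  have eq: "(\<lambda>t. a t (b t)) = step_fun rs (map (\<lambda>r. a r (b r)) rs)"
  proof
    fix t
    have "a t = step_fun rs (map a rs) t"
      unfolding a(3) using a(2) rs by (intro step_fun_refine) (auto simp: strict_sorted_imp_sorted)
    moreover have "b t = step_fun rs (map b rs) t"
      unfolding b(3) using b(2) rs by (intro step_fun_refine) (auto simp: strict_sorted_imp_sorted)
    ultimately have "a t (b t) = step_fun rs (map a rs) t (step_fun rs (map b rs) t)"
      by (simp only:)
    also have "\<dots> = step_fun rs (map2 blinfun_apply (map a rs) (map b rs)) t"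
      by (rule step_fun_map2) (use rs in \<open>auto simp: strict_sorted_imp_sorted\<close>)
    finally show "a t (b t) = step_fun rs (map (\<lambda>r. a r (b r)) rs) t"
      by (simp only: map2_map_map)
  qed
  have "norm_powr_sum p (map (\<lambda>r. step_fun ts Fs r (step_fun ss gs r)) rs)
      \<le> norm_powr_sum p Fs * norm_powr_sum p gs"
    by (rule norm_powr_sum_refined_apply_le)
      (use a b rs assms(3) in \<open>auto simp: strict_sorted_imp_sorted\<close>)
  then have "norm_powr_sum p (map (\<lambda>r. a r (b r)) rs) \<le> 1 powr p"
    using a(3,4) b(3,4) by simp
  then show ?thesis
    by (subst eq) (rule step_fun_atom_multiple[OF rs(1)], use assms(3) in auto)
qed

lemma norm_Up_atom_le:
  assumes "Up_atom p a" "0 < p"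
  shows "norm (a t) \<le> 1"
proof -
  obtain ts fs where a: "length fs = length ts" "sorted_wrt (<) ts" "a = step_fun ts fs"
      "norm_powr_sum p fs = 1"
    using assms(1) unfolding Up_atom_def norm_powr_sum_def[symmetric] by blast
  have "norm ((0 # fs) ! i) \<le> 1" if i: "i < length (0 # fs)" for i
  proof (rule ccontr)
    assume "\<not> norm ((0 # fs) ! i) \<le> 1"
    then have "1 < norm ((0 # fs) ! i) powr p" using assms(2) by simp
    moreover have "norm ((0 # fs) ! i) powr p \<le> norm_powr_sum p (0 # fs)"
      unfolding norm_powr_sum_def using i by (intro member_le_sum) auto
    ultimately show False using a(4) by simp
  qed
  moreover have "step_count ts t < length (0 # fs)"
    using step_count_le_length[of ts t] a(1) by simp
  ultimately show ?thesis
    unfolding a(3) step_fun_eq_nth[OF strict_sorted_imp_sorted[OF a(2)]] by blast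
qed

lemma Up_repr_of_atom_multiples:
  assumes "summable (\<lambda>j. \<bar>c j\<bar>)" "\<And>j. c j \<noteq> 0 \<Longrightarrow> atom_multiple p K (f j)"
    and "\<And>t. (\<lambda>j. c j *\<^sub>R f j t) sums u t"
  shows "\<exists>e w. Up_repr p u e w \<and> (\<Sum>j. \<bar>e j\<bar>) \<le> K * (\<Sum>j. \<bar>c j\<bar>)"
proof -
  have "\<exists>\<gamma> w. c j \<noteq> 0 \<longrightarrow>
      0 \<le> \<gamma> \<and> \<gamma> \<le> K \<and> (\<gamma> \<noteq> 0 \<longrightarrow> Up_atom p w) \<and> f j = (\<lambda>t. \<gamma> *\<^sub>R w t)" for j
    using assms(2)[of j] unfolding atom_multiple_def by blast
  then obtain \<gamma> w where \<gamma>w: "\<And>j. c j \<noteq> 0 \<Longrightarrow>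
      0 \<le> \<gamma> j \<and> \<gamma> j \<le> K \<and> (\<gamma> j \<noteq> 0 \<longrightarrow> Up_atom p (w j)) \<and> f j = (\<lambda>t. \<gamma> j *\<^sub>R w j t)"
    by metis
  define e where "e j = c j * \<gamma> j" for j
  have e_le: "\<bar>e j\<bar> \<le> K * \<bar>c j\<bar>" for j
    using \<gamma>w[of j] by (cases "c j = 0") (auto simp: e_def abs_mult mult.commute mult_left_mono)
  have e_sum: "summable (\<lambda>j. \<bar>e j\<bar>)"
    using e_le by (intro summable_comparison_test'[OF summable_mult[OF assms(1)]]) auto
  have "Up_repr p u e w"
    unfolding Up_repr_def
  proof (intro conjI allI impI e_sum)
    fix j assume "e j \<noteq> 0"
    then show "Up_atom p (w j)" using \<gamma>w[of j] by (auto simp: e_def)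
  next
    fix t
    have "c j *\<^sub>R f j t = e j *\<^sub>R w j t" for j
      using \<gamma>w[of j] by (cases "c j = 0") (auto simp: e_def)
    then show "(\<lambda>j. e j *\<^sub>R w j t) sums u t" using assms(3)[of t] by simp
  qed
  moreover have "(\<Sum>j. \<bar>e j\<bar>) \<le> (\<Sum>j. K * \<bar>c j\<bar>)"
    by (rule suminf_le[OF e_le e_sum summable_mult[OF assms(1)]])
  then have "(\<Sum>j. \<bar>e j\<bar>) \<le> K * (\<Sum>j. \<bar>c j\<bar>)"
    by (simp add: suminf_mult[OF assms(1)])
  ultimately show ?thesis by blast
qed

lemma in_Up_blinfun:
  fixes L :: "'a::real_normed_vector \<Rightarrow>\<^sub>L 'b::real_normed_vector"
  assumes "0 < p" "in_Up p u"
  shows "in_Up p (\<lambda>t. L (u t))"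
proof -
  obtain c a where u: "Up_repr p u c a" using assms(2) unfolding in_Up_def by blast
  have "(\<lambda>j. c j *\<^sub>R L (a j t)) sums L (u t)" for t
  proof -
    have "(\<lambda>j. c j *\<^sub>R a j t) sums u t" using u unfolding Up_repr_def by blast
    from bounded_linear.sums[OF blinfun.bounded_linear_right[of L] this] show ?thesis
      by (simp add: blinfun.scaleR_right)
  qed
  moreover have "atom_multiple p (norm L) (\<lambda>t. L (a j t))" if "c j \<noteq> 0" for j
    using u that assms(1) unfolding Up_repr_def by (blast intro: atom_multiple_blinfun)
  moreover have "summable (\<lambda>j. \<bar>c j\<bar>)" using u unfolding Up_repr_def by blast
  ultimately show ?thesis
    using Up_repr_of_atom_multiples[of c p "norm L" "\<lambda>j t. L (a j t)" "\<lambda>t. L (u t)"]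
    unfolding in_Up_def by blast
qed

lemma Up_repr_apply:
  fixes A :: "real \<Rightarrow> ('a::real_normed_vector \<Rightarrow>\<^sub>L 'b::real_normed_vector)"
  assumes p: "0 < p" and A: "Up_repr p A c a" and u: "Up_repr p u d b"
  shows "\<exists>e w. Up_repr p (\<lambda>t. A t (u t)) e w \<and> (\<Sum>n. \<bar>e n\<bar>) \<le> (\<Sum>i. \<bar>c i\<bar>) * (\<Sum>j. \<bar>d j\<bar>)"
proof -
  define cd where "cd n = c (fst (prod_decode n)) * d (snd (prod_decode n))" for n
  have "((\<lambda>(i, j). \<bar>c i\<bar> * \<bar>d j\<bar>) has_sum (\<Sum>i. \<bar>c i\<bar>) * (\<Sum>j. \<bar>d j\<bar>)) UNIV"
    using A u unfolding Up_repr_def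
    by (intro bounded_bilinear.has_sum_prod[OF bounded_bilinear_mult]) (auto simp: summable_sums)
  from has_sum_imp_sums_prod_decode[OF this]
  have cd: "(\<lambda>n. \<bar>cd n\<bar>) sums ((\<Sum>i. \<bar>c i\<bar>) * (\<Sum>j. \<bar>d j\<bar>))"
    by (simp add: cd_def abs_mult case_prod_unfold)
  have "(\<lambda>n. cd n *\<^sub>R a (fst (prod_decode n)) t (b (snd (prod_decode n)) t)) sums A t (u t)" for t
  proof -
    have "norm (c i *\<^sub>R a i t) \<le> \<bar>c i\<bar>" for i
      using A norm_Up_atom_le[OF _ p, of "a i" t] unfolding Up_repr_def
      by (cases "c i = 0") (auto intro: mult_left_le)
    then have "summable (\<lambda>i. norm (c i *\<^sub>R a i t))"
      using A unfolding Up_repr_def by (auto intro: summable_comparison_test')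
    moreover have "norm (d j *\<^sub>R b j t) \<le> \<bar>d j\<bar>" for j
      using u norm_Up_atom_le[OF _ p, of "b j" t] unfolding Up_repr_def
      by (cases "d j = 0") (auto intro: mult_left_le)
    then have "summable (\<lambda>j. norm (d j *\<^sub>R b j t))"
      using u unfolding Up_repr_def by (auto intro: summable_comparison_test')
    moreover have "(\<lambda>i. c i *\<^sub>R a i t) sums A t" "(\<lambda>j. d j *\<^sub>R b j t) sums u t"
      using A u unfolding Up_repr_def by auto
    ultimately have "((\<lambda>(i, j). (c i *\<^sub>R a i t) (d j *\<^sub>R b j t)) has_sum A t (u t)) UNIV"
      by (intro bounded_bilinear.has_sum_prod[OF bounded_bilinear_blinfun_apply])
    from has_sum_imp_sums_prod_decode[OF this] show ?thesis
      by (simp add: cd_def case_prod_unfold blinfun.scaleR_left blinfun.scaleR_right mult.commute)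
  qed
  moreover have "atom_multiple p 1 (\<lambda>t. a (fst (prod_decode n)) t (b (snd (prod_decode n)) t))"
    if "cd n \<noteq> 0" for n
  proof (rule atom_multiple_apply[OF _ _ p])
    show "Up_atom p (a (fst (prod_decode n)))" "Up_atom p (b (snd (prod_decode n)))"
      using that A u unfolding cd_def Up_repr_def by auto
  qed
  moreover have "summable (\<lambda>n. \<bar>cd n\<bar>)" "(\<Sum>n. \<bar>cd n\<bar>) = (\<Sum>i. \<bar>c i\<bar>) * (\<Sum>j. \<bar>d j\<bar>)"
    using cd by (simp_all add: sums_iff)
  ultimately show ?thesis
    using Up_repr_of_atom_multiples[of cd p 1
        "\<lambda>n t. a (fst (prod_decode n)) t (b (snd (prod_decode n)) t)" "\<lambda>t. A t (u t)"]
    by auto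
qed

lemma Up_norm_le: "Up_repr p u c a \<Longrightarrow> Up_norm p u \<le> (\<Sum>j. \<bar>c j\<bar>)"
  unfolding Up_norm_def
  by (rule cInf_lower) (auto intro!: bdd_belowI[of _ 0] suminf_nonneg simp: Up_repr_def)

lemma Up_norm_nonneg:
  assumes "in_Up p u"
  shows "0 \<le> Up_norm p u"
proof -
  obtain c a where "Up_repr p u c a" using assms unfolding in_Up_def by blast
  then show ?thesis
    unfolding Up_norm_def by (intro cInf_greatest) (auto intro: suminf_nonneg simp: Up_repr_def)
qed

lemma Up_apply:
  fixes A :: "real \<Rightarrow> ('a::real_normed_vector \<Rightarrow>\<^sub>L 'b::real_normed_vector)"
  assumes p: "0 < p" and A: "in_Up p A" and u: "in_Up p u"
  shows "in_Up p (\<lambda>t. A t (u t)) \<and> Up_norm p (\<lambda>t. A t (u t)) \<le> Up_norm p A * Up_norm p u"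
proof
  show "in_Up p (\<lambda>t. A t (u t))"
    using A u Up_repr_apply[OF p] unfolding in_Up_def by blast
  show "Up_norm p (\<lambda>t. A t (u t)) \<le> Up_norm p A * Up_norm p u"
    unfolding Up_norm_def[of p A] Up_norm_def[of p u]
  proof (rule le_cInf_mult)
    fix s t assume "s \<in> {s. \<exists>c a. Up_repr p A c a \<and> s = (\<Sum>j. \<bar>c j\<bar>)}"
      and "t \<in> {s. \<exists>c a. Up_repr p u c a \<and> s = (\<Sum>j. \<bar>c j\<bar>)}"
    then obtain c a d b where "Up_repr p A c a" "Up_repr p u d b"
        "s = (\<Sum>j. \<bar>c j\<bar>)" "t = (\<Sum>j. \<bar>d j\<bar>)"
      by blast
    then obtain e w where "Up_repr p (\<lambda>t. A t (u t)) e w" "(\<Sum>n. \<bar>e n\<bar>) \<le> s * t"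
      using Up_repr_apply[OF p] by blast
    then show "Up_norm p (\<lambda>t. A t (u t)) \<le> s * t"
      using Up_norm_le by fastforce
  next
    show "{s. \<exists>c a. Up_repr p A c a \<and> s = (\<Sum>j. \<bar>c j\<bar>)} \<noteq> {}"
      "{s. \<exists>c a. Up_repr p u c a \<and> s = (\<Sum>j. \<bar>c j\<bar>)} \<noteq> {}"
      using A u unfolding in_Up_def by blast+
  qed (auto simp: Up_repr_def intro: suminf_nonneg)
qed


section \<open>Products in V^p\<close>

lemma pvar_sum_apply_le:
  fixes B :: "real \<Rightarrow> ('a::real_normed_vector \<Rightarrow>\<^sub>L 'b::real_normed_vector)"
  assumes p: "1 \<le> p" and B: "\<And>t. norm (B t) \<le> SB" and v: "\<And>t. norm (v t) \<le> Sv"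
  shows "pvar_sum p (\<lambda>t. B t (v t)) ts \<le> Sv * pvar_sum p B ts + SB * pvar_sum p v ts"
proof -
  have SB: "0 \<le> SB" and Sv: "0 \<le> Sv"
    using B[of 0] v[of 0] norm_ge_zero order_trans by blast+
  define I where "I = {..<length ts - 1}"
  define \<alpha> where "\<alpha> j = Sv * norm (B (ts!Suc j) - B (ts!j))" for j
  define \<beta> where "\<beta> j = SB * norm (v (ts!Suc j) - v (ts!j))" for j
  have incr: "norm (B s (v s) - B r (v r)) \<le> Sv * norm (B s - B r) + SB * norm (v s - v r)"
    for r s
  proof -
    have "B s (v s) - B r (v r) = (B s - B r) (v s) + B r (v s - v r)"
      by (simp add: blinfun.diff_left blinfun.diff_right)
    also have "norm \<dots> \<le> norm (B s - B r) * norm (v s) + norm (B r) * norm (v s - v r)"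
      by (rule norm_triangle_le[OF add_mono[OF norm_blinfun norm_blinfun]])
    also have "\<dots> \<le> norm (B s - B r) * Sv + SB * norm (v s - v r)"
      by (intro add_mono mult_left_mono mult_right_mono B v) auto
    finally show ?thesis by (simp add: mult.commute)
  qed
  have "pvar_sum p (\<lambda>t. B t (v t)) ts \<le> (\<Sum>j\<in>I. (\<alpha> j + \<beta> j) powr p) powr (1 / p)"
    unfolding pvar_sum_def I_def \<alpha>_def \<beta>_def using p
    by (intro powr_mono2 sum_mono sum_nonneg) (auto simp: incr)
  also have "\<dots> \<le> (\<Sum>j\<in>I. \<alpha> j powr p) powr (1 / p) + (\<Sum>j\<in>I. \<beta> j powr p) powr (1 / p)"
    using SB Sv by (intro Minkowski_sum_powr p) (auto simp: I_def \<alpha>_def \<beta>_def)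
  also have "\<dots> = Sv * pvar_sum p B ts + SB * pvar_sum p v ts"
    unfolding pvar_sum_def I_def \<alpha>_def \<beta>_def using SB Sv p by (simp add: sum_powr_scale)
  finally show ?thesis .
qed

definition sup_norm :: "(real \<Rightarrow> 'a::real_normed_vector) \<Rightarrow> real" where
  "sup_norm v = (SUP t. norm (v t))"

definition p_variation :: "real \<Rightarrow> (real \<Rightarrow> 'a::real_normed_vector) \<Rightarrow> real" where
  "p_variation p v = (SUP ts\<in>{ts. sorted_wrt (<) ts}. pvar_sum p v ts)"

lemma Vp_norm_eq: "Vp_norm p v = sup_norm v + p_variation p v"
  unfolding Vp_norm_def sup_norm_def p_variation_def ..

lemma norm_le_sup_norm: "bdd_above (range (\<lambda>t. norm (v t))) \<Longrightarrow> norm (v t) \<le> sup_norm v"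
  unfolding sup_norm_def by (rule cSUP_upper) auto

lemma sup_norm_nonneg: "bdd_above (range (\<lambda>t. norm (v t))) \<Longrightarrow> 0 \<le> sup_norm v"
  using norm_le_sup_norm[of v 0] norm_ge_zero order_trans by blast

lemma pvar_sum_le_p_variation:
  "bdd_above (pvar_sum p v ` {ts. sorted_wrt (<) ts}) \<Longrightarrow> sorted_wrt (<) ts
    \<Longrightarrow> pvar_sum p v ts \<le> p_variation p v"
  unfolding p_variation_def by (rule cSUP_upper) auto

lemma p_variation_nonneg:
  "bdd_above (pvar_sum p v ` {ts. sorted_wrt (<) ts}) \<Longrightarrow> 0 \<le> p_variation p v"
  using pvar_sum_le_p_variation[of p v "[]"] by (simp add: pvar_sum_def)

lemma Vp_norm_nonneg: "in_Vp p v \<Longrightarrow> 0 \<le> Vp_norm p v"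
  unfolding in_Vp_def Vp_norm_eq by (simp add: sup_norm_nonneg p_variation_nonneg)

(* B only needs to be bounded, not to vanish at -infinity, so constant operators are covered. *)
lemma in_Vp_apply:
  fixes B :: "real \<Rightarrow> ('a::real_normed_vector \<Rightarrow>\<^sub>L 'b::real_normed_vector)"
  assumes p: "1 \<le> p" and B: "\<And>t. continuous (at_right t) B" "bdd_above (range (\<lambda>t. norm (B t)))"
      "bdd_above (pvar_sum p B ` {ts. sorted_wrt (<) ts})"
    and v: "in_Vp p v"
  shows "in_Vp p (\<lambda>t. B t (v t)) \<and>
    Vp_norm p (\<lambda>t. B t (v t)) \<le> (sup_norm B + p_variation p B) * Vp_norm p v"
proof
  have v_bdd: "bdd_above (range (\<lambda>t. norm (v t)))"
      "bdd_above (pvar_sum p v ` {ts. sorted_wrt (<) ts})"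
    using v unfolding in_Vp_def by auto
  note B_le = norm_le_sup_norm[OF B(2)] pvar_sum_le_p_variation[OF B(3)]
  note v_le = norm_le_sup_norm[OF v_bdd(1)] pvar_sum_le_p_variation[OF v_bdd(2)]
  note nonneg = sup_norm_nonneg[OF B(2)] p_variation_nonneg[OF B(3)]
    sup_norm_nonneg[OF v_bdd(1)] p_variation_nonneg[OF v_bdd(2)]
  have norm_le: "norm (B t (v t)) \<le> sup_norm B * norm (v t)" for t
    using norm_blinfun[of "B t" "v t"] B_le(1)[of t] by (simp add: mult_right_mono order_trans)
  then have sup_le: "norm (B t (v t)) \<le> sup_norm B * sup_norm v" for t
    using v_le(1)[of t] nonneg(1) by (meson mult_left_mono order_trans)
  have pvar_le: "pvar_sum p (\<lambda>t. B t (v t)) ts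
      \<le> sup_norm v * p_variation p B + sup_norm B * p_variation p v"
    if "sorted_wrt (<) ts" for ts
  proof -
    have "pvar_sum p (\<lambda>t. B t (v t)) ts
        \<le> sup_norm v * pvar_sum p B ts + sup_norm B * pvar_sum p v ts"
      by (rule pvar_sum_apply_le[OF p B_le(1) v_le(1)])
    also have "\<dots> \<le> sup_norm v * p_variation p B + sup_norm B * p_variation p v"
      using B_le(2)[OF that] v_le(2)[OF that] nonneg by (intro add_mono mult_left_mono) auto
    finally show ?thesis .
  qed
  show "in_Vp p (\<lambda>t. B t (v t))"
    unfolding in_Vp_def
  proof (intro conjI allI)
    show "continuous (at_right t) (\<lambda>t. B t (v t))" for t
      using B(1) v unfolding in_Vp_def by (auto intro: blinfun.continuous)
    have "((\<lambda>t. sup_norm B * norm (v t)) \<longlongrightarrow> 0) at_bot"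
      using v unfolding in_Vp_def by (intro tendsto_mult_right_zero tendsto_norm_zero) auto
    then show "((\<lambda>t. B t (v t)) \<longlongrightarrow> 0) at_bot"
      by (rule Lim_null_comparison[rotated]) (simp add: norm_le)
    show "bdd_above (range (\<lambda>t. norm (B t (v t))))"
      using sup_le by (intro bdd_aboveI2)
    show "bdd_above (pvar_sum p (\<lambda>t. B t (v t)) ` {ts. sorted_wrt (<) ts})"
      using pvar_le by (intro bdd_aboveI2) auto
  qed
  have "sup_norm (\<lambda>t. B t (v t)) \<le> sup_norm B * sup_norm v"
    unfolding sup_norm_def[of "\<lambda>t. B t (v t)"] by (rule cSUP_least) (auto simp: sup_le)
  moreover have "p_variation p (\<lambda>t. B t (v t))
      \<le> sup_norm v * p_variation p B + sup_norm B * p_variation p v"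
    unfolding p_variation_def[of p "\<lambda>t. B t (v t)"]
  proof (rule cSUP_least)
    show "{ts. sorted_wrt (<) ts} \<noteq> {}" using sorted_wrt.simps(1) by blast
  qed (simp add: pvar_le)
  ultimately have "Vp_norm p (\<lambda>t. B t (v t))
      \<le> sup_norm B * sup_norm v + (sup_norm v * p_variation p B + sup_norm B * p_variation p v)"
    unfolding Vp_norm_eq by (rule add_mono)
  also have "\<dots> \<le> (sup_norm B + p_variation p B) * Vp_norm p v"
    unfolding Vp_norm_eq using nonneg by (simp add: algebra_simps)
  finally show "Vp_norm p (\<lambda>t. B t (v t)) \<le> (sup_norm B + p_variation p B) * Vp_norm p v" .
qed

lemma Vp_apply:
  fixes B :: "real \<Rightarrow> ('a::real_normed_vector \<Rightarrow>\<^sub>L 'b::real_normed_vector)"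
  assumes p: "1 \<le> p" and B: "in_Vp p B" and v: "in_Vp p v"
  shows "in_Vp p (\<lambda>t. B t (v t)) \<and> Vp_norm p (\<lambda>t. B t (v t)) \<le> Vp_norm p B * Vp_norm p v"
proof -
  have "\<And>t. continuous (at_right t) B" "bdd_above (range (\<lambda>t. norm (B t)))"
    "bdd_above (pvar_sum p B ` {ts. sorted_wrt (<) ts})"
    using B unfolding in_Vp_def by auto
  from in_Vp_apply[OF p this v] show ?thesis by (simp add: Vp_norm_eq[of p B])
qed

lemma in_Vp_blinfun:
  fixes L :: "'a::real_normed_vector \<Rightarrow>\<^sub>L 'b::real_normed_vector"
  assumes "1 \<le> p" "in_Vp p v"
  shows "in_Vp p (\<lambda>t. L (v t))"
proof -
  have "bdd_above (pvar_sum p (\<lambda>_. L) ` {ts. sorted_wrt (<) ts})"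
    by (rule bdd_aboveI2[of _ _ 0]) (simp add: pvar_sum_def)
  then show ?thesis
    using in_Vp_apply[OF assms(1) _ _ _ assms(2), of "\<lambda>_. L"] by simp
qed


section \<open>Littlewood-Paley square sums\<close>

lemma blinfun_apply_commute:
  "A o\<^sub>L P = P o\<^sub>L A \<Longrightarrow> P (A x) = A (P x)"
  by (metis blinfun_apply_blinfun_compose)

lemma l2Up_apply:
  fixes A P :: "_ \<Rightarrow> ('a::real_normed_vector \<Rightarrow>\<^sub>L 'a)"
  assumes p: "0 < p" and A: "in_Up p A" and u: "in_Up p u"
    and comm: "\<And>k t. A t o\<^sub>L P k = P k o\<^sub>L A t" and sq: "l2Up_sq p P u summable_on UNIV"
  shows "l2Up_sq p P (\<lambda>t. A t (u t)) summable_on UNIV \<and>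
    l2Up_norm p P (\<lambda>t. A t (u t)) \<le> Up_norm p A * l2Up_norm p P u"
  unfolding l2Up_norm_def
proof (rule sqrt_infsum_le[OF sq])
  fix k
  have "P k (A t (u t)) = A t (P k (u t))" for t
    using comm by (rule blinfun_apply_commute)
  then have "l2Up_sq p P (\<lambda>t. A t (u t)) k = (Up_norm p (\<lambda>t. A t (P k (u t))))\<^sup>2"
    by (simp add: l2Up_sq_def)
  also have "\<dots> \<le> (Up_norm p A * Up_norm p (\<lambda>t. P k (u t)))\<^sup>2"
    using Up_apply[OF p A in_Up_blinfun[OF p u]] Up_norm_nonneg in_Up_blinfun[OF p u]
    by (intro power_mono) auto
  finally show "l2Up_sq p P (\<lambda>t. A t (u t)) k \<le> (Up_norm p A)\<^sup>2 * l2Up_sq p P u k"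
    by (simp add: l2Up_sq_def power_mult_distrib)
qed (simp_all add: l2Up_sq_def Up_norm_nonneg[OF A])

lemma l2Vp_apply:
  fixes B P :: "_ \<Rightarrow> ('a::real_normed_vector \<Rightarrow>\<^sub>L 'a)"
  assumes p: "1 \<le> p" and B: "in_Vp p B" and v: "in_Vp p v"
    and comm: "\<And>k t. B t o\<^sub>L P k = P k o\<^sub>L B t" and sq: "l2Vp_sq p P v summable_on UNIV"
  shows "l2Vp_sq p P (\<lambda>t. B t (v t)) summable_on UNIV \<and>
    l2Vp_norm p P (\<lambda>t. B t (v t)) \<le> Vp_norm p B * l2Vp_norm p P v"
  unfolding l2Vp_norm_def
proof (rule sqrt_infsum_le[OF sq])
  fix k
  have "P k (B t (v t)) = B t (P k (v t))" for t
    using comm by (rule blinfun_apply_commute)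
  then have "l2Vp_sq p P (\<lambda>t. B t (v t)) k = (Vp_norm p (\<lambda>t. B t (P k (v t))))\<^sup>2"
    by (simp add: l2Vp_sq_def)
  also have "\<dots> \<le> (Vp_norm p B * Vp_norm p (\<lambda>t. P k (v t)))\<^sup>2"
    using Vp_apply[OF p B in_Vp_blinfun[OF p v]] Vp_norm_nonneg in_Vp_blinfun[OF p v]
    by (intro power_mono) auto
  finally show "l2Vp_sq p P (\<lambda>t. B t (v t)) k \<le> (Vp_norm p B)\<^sup>2 * l2Vp_sq p P v k"
    by (simp add: l2Vp_sq_def power_mult_distrib)
qed (simp_all add: l2Vp_sq_def Vp_norm_nonneg[OF B])

theorem lemma2p7:
  fixes p :: real
    and A B :: "real \<Rightarrow> ('h::{real_inner,complete_space} \<Rightarrow>\<^sub>L 'h)"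
    and P :: "int \<Rightarrow> ('h \<Rightarrow>\<^sub>L 'h)"
    and u v :: "real \<Rightarrow> 'h"
  assumes "1 \<le> p"
    and "in_Up p A" and "in_Vp p B"
    and "in_Up p u" and "in_Vp p v"
  shows "in_Up p (\<lambda>t. blinfun_apply (A t) (u t))
    \<and> in_Vp p (\<lambda>t. blinfun_apply (B t) (v t))
    \<and> Up_norm p (\<lambda>t. blinfun_apply (A t) (u t)) \<le> Up_norm p A * Up_norm p u
    \<and> Vp_norm p (\<lambda>t. blinfun_apply (B t) (v t)) \<le> Vp_norm p B * Vp_norm p v
    \<and> ((\<forall>k t. A t o\<^sub>L P k = P k o\<^sub>L A t) \<longrightarrow> l2Up_sq p P u summable_on UNIV \<longrightarrow>
         l2Up_sq p P (\<lambda>t. blinfun_apply (A t) (u t)) summable_on UNIV \<and>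
         l2Up_norm p P (\<lambda>t. blinfun_apply (A t) (u t)) \<le> Up_norm p A * l2Up_norm p P u)
    \<and> ((\<forall>k t. B t o\<^sub>L P k = P k o\<^sub>L B t) \<longrightarrow> l2Vp_sq p P v summable_on UNIV \<longrightarrow>
         l2Vp_sq p P (\<lambda>t. blinfun_apply (B t) (v t)) summable_on UNIV \<and>
         l2Vp_norm p P (\<lambda>t. blinfun_apply (B t) (v t)) \<le> Vp_norm p B * l2Vp_norm p P v)"
proof -
  have p: "0 < p" using assms(1) by simp
  show ?thesis
    using Up_apply[OF p assms(2,4)] Vp_apply[OF assms(1,3,5)]
      l2Up_apply[OF p assms(2,4)] l2Vp_apply[OF assms(1,3,5)]
    by blast
qed

end
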